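(* Let $p\ge1$, $\sigma^2>0$, $\boldsymbol\beta\in\mathbb{R}^p$ not identically zero with $\beta_1\le\cdots\le\beta_p$, $\delta_1^2,\dots,\delta_p^2>0$, $\sum_{i=1}^p\beta_i/\delta_i^2\ge0$, and $\Sigma=\sigma^2\boldsymbol\beta\boldsymbol\beta^\top+\mathrm{diag}(\delta_1^2,\dots,\delta_p^2)$. Let $w=w^L$ be the long-only minimum variance portfolio (the minimizer of $w^\top\Sigma w$ subject to $w^\top\mathbf{1}_p=1$, $w\ge0$), $K=\{i:w_i>0\}$, $k=|K|$, $P=\{1,\dots,p\}$, and let $w^{LS}=\Sigma^{-1}\mathbf{1}_p/(\mathbf{1}_p^\top\Sigma^{-1}\mathbf{1}_p)$ be the long-short minimum variance portfolio. Then either $K=P$ and $w^{LS}=w^L$, or else $K\ne P$, $\sum_{j=1}^k\beta_j/\delta_j^2>0$, and for every $i$, $$w_i>0\iff \beta_i<\frac{\frac{1}{\sigma^2}+\sum_{j=1}^k\frac{\beta_j^2}{\delta_j^2}}{\sum_{j=1}^k\frac{\beta_j}{\delta_j^2}}.$$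
   Context: $\mathbf{1}_p$ is the all-ones vector in $\mathbb{R}^p$. *)

theory Defs
  imports "Jordan_Normal_Form.Gauss_Jordan_Elimination"
begin

text \<open>Indices are 0-based: the paper's index i corresponds to i-1 here.
  d is the vector of idiosyncratic variances (d i = delta_(i+1)^2).\<close>

definition ones_vec :: "nat \<Rightarrow> real vec" where
  "ones_vec p = vec p (\<lambda>_. 1)"

definition factor_cov :: "nat \<Rightarrow> real \<Rightarrow> real vec \<Rightarrow> real vec \<Rightarrow> real mat" where
  "factor_cov p s2 \<beta> d = mat p p (\<lambda>(i,j). s2 * (\<beta> $ i) * (\<beta> $ j) + (if i = j then d $ i else 0))"

definition port_var :: "real mat \<Rightarrow> real vec \<Rightarrow> real" where
  "port_var S w = w \<bullet> (S *\<^sub>v w)"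

definition long_only_feasible :: "nat \<Rightarrow> real vec \<Rightarrow> bool" where
  "long_only_feasible p w \<longleftrightarrow> w \<in> carrier_vec p \<and> w \<bullet> ones_vec p = 1 \<and> (\<forall>i<p. w $ i \<ge> 0)"

text \<open>w is the long-only minimum variance portfolio (the minimizer is unique since S is
  positive definite).\<close>
definition is_long_only_mvp :: "nat \<Rightarrow> real mat \<Rightarrow> real vec \<Rightarrow> bool" where
  "is_long_only_mvp p S w \<longleftrightarrow> long_only_feasible p w \<and>
     (\<forall>v. long_only_feasible p v \<longrightarrow> port_var S w \<le> port_var S v)"

definition long_short_mvp :: "nat \<Rightarrow> real mat \<Rightarrow> real vec" where
  "long_short_mvp p S = (let Si = the (mat_inverse S) in
      (1 / (ones_vec p \<bullet> (Si *\<^sub>v ones_vec p))) \<cdot>\<^sub>v (Si *\<^sub>v ones_vec p))"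

end

theory Submission
  imports Defs "Jordan_Normal_Form.Determinant"
begin

text \<open>The long-only minimum variance portfolio w satisfies the KKT conditions: moving a small
  weight from an asset i with w_i > 0 to any asset j cannot lower the variance, so the marginal
  variance (S w)_i is a constant lam = w' S w > 0 on the support K and at least lam off it.
  For S = s2 beta beta' + diag d one has (S w)_i = c beta_i + d_i w_i with c = s2 beta'w.
  If K is everything then S w = lam 1, so w is the long-short portfolio. Otherwise
  w_i = (lam - c beta_i) / d_i on K and c beta_j \<ge> lam off K; summing beta_i w_i over K gives
  c (1/s2 + \<Sigma>_K beta^2/d) = lam \<Sigma>_K beta/d, and the hypothesis \<Sigma> beta/d \<ge> 0 rules out c < 0.
  Hence w_i > 0 iff beta_i < lam / c, which is the stated threshold, and by monotonicity of
  beta the support consists of the first k assets.\<close>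

lemma port_var_add:
  fixes S :: "real mat"
  assumes S: "S \<in> carrier_mat n n" "transpose_mat S = S"
    and v: "v \<in> carrier_vec n" and u: "u \<in> carrier_vec n"
  shows "port_var S (v + u) = port_var S v + 2 * (u \<bullet> (S *\<^sub>v v)) + port_var S u"
proof -
  have "v \<bullet> (S *\<^sub>v u) = (S *\<^sub>v v) \<bullet> u"
    using transpose_vec_mult_scalar[OF S(1) u v] S(2) by simp
  also have "\<dots> = u \<bullet> (S *\<^sub>v v)"
    using S(1) u v by (intro comm_scalar_prod[of _ n]) auto
  finally have sym: "v \<bullet> (S *\<^sub>v u) = u \<bullet> (S *\<^sub>v v)" .
  have "port_var S (v + u) = (v + u) \<bullet> (S *\<^sub>v v + S *\<^sub>v u)"
    unfolding port_var_def using S(1) u v by (simp add: mult_add_distrib_mat_vec)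
  also have "\<dots> = v \<bullet> (S *\<^sub>v v) + v \<bullet> (S *\<^sub>v u) + (u \<bullet> (S *\<^sub>v v) + u \<bullet> (S *\<^sub>v u))"
    using S(1) u v by (simp add: add_scalar_prod_distrib[of _ n] scalar_prod_add_distrib[of _ n])
  finally show ?thesis unfolding port_var_def sym by simp
qed

lemma port_var_smult:
  fixes S :: "real mat"
  assumes "S \<in> carrier_mat n n" and "u \<in> carrier_vec n"
  shows "port_var S (t \<cdot>\<^sub>v u) = t\<^sup>2 * port_var S u"
  using assms unfolding port_var_def by (simp add: mult_mat_vec power2_eq_square)

lemma nonneg_if_linear_plus_quadratic_nonneg:
  fixes a M h :: real
  assumes "h > 0" and nonneg: "\<And>t. 0 < t \<Longrightarrow> t \<le> h \<Longrightarrow> 0 \<le> a * t + M * t\<^sup>2"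
  shows "a \<ge> 0"
proof (rule ccontr)
  assume "\<not> a \<ge> 0"
  define t where "t = min h (- a / (\<bar>M\<bar> + 1))"
  have "0 < - a / (\<bar>M\<bar> + 1)" using \<open>\<not> a \<ge> 0\<close> by (intro divide_pos_pos) auto
  hence t: "0 < t" "t \<le> h" using \<open>h > 0\<close> by (auto simp: t_def)
  have "\<bar>M\<bar> * t < - a"
  proof -
    have "\<bar>M\<bar> * t \<le> \<bar>M\<bar> * (- a / (\<bar>M\<bar> + 1))" unfolding t_def by (intro mult_left_mono) auto
    also have "\<dots> < - a" using \<open>\<not> a \<ge> 0\<close> by (simp add: field_simps)
    finally show ?thesis .
  qed
  hence "t * (a + \<bar>M\<bar> * t) < 0" using t by (simp add: mult_pos_neg)
  moreover have "M * t\<^sup>2 \<le> \<bar>M\<bar> * t\<^sup>2" by (intro mult_right_mono) auto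
  ultimately show False using nonneg[OF t] by (simp add: algebra_simps power2_eq_square)
qed

lemma long_only_mvp_gradient_le:
  fixes S :: "real mat"
  assumes S: "S \<in> carrier_mat p p" "transpose_mat S = S"
    and mvp: "is_long_only_mvp p S w"
    and i: "i < p" "0 < w $ i" and j: "j < p"
  shows "(S *\<^sub>v w) $ i \<le> (S *\<^sub>v w) $ j"
proof -
  have w: "w \<in> carrier_vec p" "w \<bullet> ones_vec p = 1" "\<And>l. l < p \<Longrightarrow> 0 \<le> w $ l"
    using mvp unfolding is_long_only_mvp_def long_only_feasible_def by auto
  define u :: "real vec" where "u = unit_vec p j - unit_vec p i"
  have u: "u \<in> carrier_vec p" by (simp add: u_def)
  have u_ones: "u \<bullet> ones_vec p = 0"
    using i j by (simp add: u_def ones_vec_def minus_scalar_prod_distrib[of _ p])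
  have u_grad: "u \<bullet> (S *\<^sub>v w) = (S *\<^sub>v w) $ j - (S *\<^sub>v w) $ i"
    using i j S(1) w(1) by (simp add: u_def minus_scalar_prod_distrib[of _ p])
  have "0 \<le> 2 * (u \<bullet> (S *\<^sub>v w))"
  proof (rule nonneg_if_linear_plus_quadratic_nonneg[OF i(2)])
    fix t :: real assume t: "0 < t" "t \<le> w $ i"
    have "(w + t \<cdot>\<^sub>v u) \<bullet> ones_vec p = w \<bullet> ones_vec p + t * (u \<bullet> ones_vec p)"
      using w(1) u by (simp add: add_scalar_prod_distrib[of _ p] ones_vec_def)
    moreover have "0 \<le> (w + t \<cdot>\<^sub>v u) $ l" if "l < p" for l
      using w(3)[OF that] t i j that by (auto simp: u_def)
    ultimately have "long_only_feasible p (w + t \<cdot>\<^sub>v u)"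
      unfolding long_only_feasible_def using w u u_ones by simp
    hence "port_var S w \<le> port_var S (w + t \<cdot>\<^sub>v u)"
      using mvp unfolding is_long_only_mvp_def by blast
    also have "\<dots> = port_var S w + 2 * (u \<bullet> (S *\<^sub>v w)) * t + port_var S u * t\<^sup>2"
      using S w(1) u by (simp add: port_var_add port_var_smult)
    finally show "0 \<le> 2 * (u \<bullet> (S *\<^sub>v w)) * t + port_var S u * t\<^sup>2" by simp
  qed
  thus ?thesis unfolding u_grad by simp
qed

lemma long_only_mvp_KKT:
  fixes S :: "real mat"
  assumes S: "S \<in> carrier_mat p p" "transpose_mat S = S"
    and mvp: "is_long_only_mvp p S w"
  obtains lam where "lam = port_var S w"
    and "\<And>i. i < p \<Longrightarrow> 0 < w $ i \<Longrightarrow> (S *\<^sub>v w) $ i = lam"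
    and "\<And>j. j < p \<Longrightarrow> lam \<le> (S *\<^sub>v w) $ j"
proof -
  have w: "w \<in> carrier_vec p" "(\<Sum>l<p. w $ l) = 1" "\<And>l. l < p \<Longrightarrow> 0 \<le> w $ l"
    using mvp unfolding is_long_only_mvp_def long_only_feasible_def ones_vec_def scalar_prod_def
    by (auto simp: atLeast0LessThan)
  have "\<exists>i0<p. 0 < w $ i0"
  proof (rule ccontr)
    assume "\<not> (\<exists>i0<p. 0 < w $ i0)"
    hence "\<And>l. l < p \<Longrightarrow> w $ l = 0" using w(3) by (meson order.antisym not_less)
    thus False using w(2) by simp
  qed
  then obtain i0 where i0: "i0 < p" "0 < w $ i0" by blast
  let ?g = "S *\<^sub>v w"
  have on_support: "?g $ i = ?g $ i0" if "i < p" "0 < w $ i" for i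
    using long_only_mvp_gradient_le[OF S mvp] that i0 by (meson order.antisym)
  have "port_var S w = (\<Sum>l<p. w $ l * ?g $ l)"
    using S(1) w(1) unfolding port_var_def scalar_prod_def by (simp add: atLeast0LessThan)
  also have "\<dots> = (\<Sum>l<p. w $ l * ?g $ i0)"
    using w(3) on_support by (intro sum.cong) (auto simp: less_eq_real_def)
  also have "\<dots> = ?g $ i0" using w(2) by (simp add: sum_distrib_right[symmetric])
  finally show ?thesis
    using that on_support long_only_mvp_gradient_le[OF S mvp i0] by metis
qed

lemma det_neq_0_if_port_var_pos:
  fixes S :: "real mat"
  assumes S: "S \<in> carrier_mat n n"
    and pos: "\<And>v. v \<in> carrier_vec n \<Longrightarrow> v \<noteq> 0\<^sub>v n \<Longrightarrow> 0 < port_var S v"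
  shows "det S \<noteq> 0"
proof
  assume "det S = 0"
  then obtain v where "v \<in> carrier_vec n" "v \<noteq> 0\<^sub>v n" "S *\<^sub>v v = 0\<^sub>v n"
    using det_0_iff_vec_prod_zero_field[OF S] by blast
  thus False using pos[of v] unfolding port_var_def by simp
qed

lemma long_short_mvp_eqI:
  fixes S :: "real mat"
  assumes S: "S \<in> carrier_mat p p" "det S \<noteq> 0"
    and w: "w \<in> carrier_vec p" "w \<bullet> ones_vec p = 1"
    and grad: "S *\<^sub>v w = lam \<cdot>\<^sub>v ones_vec p"
  shows "long_short_mvp p S = w"
proof -
  have one: "ones_vec p \<in> carrier_vec p" by (simp add: ones_vec_def)
  obtain B where B: "mat_inverse S = Some B"
    using mat_inverse(1)[OF S(1), of "()"] det_non_zero_imp_unit[OF S] by fastforce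
  hence BS: "B * S = 1\<^sub>m p" and Bc: "B \<in> carrier_mat p p" using mat_inverse(2)[OF S(1)] by auto
  have "w = B *\<^sub>v (S *\<^sub>v w)" using BS Bc S(1) w(1)
    by (metis assoc_mult_mat_vec one_mult_mat_vec)
  also have "\<dots> = lam \<cdot>\<^sub>v (B *\<^sub>v ones_vec p)" using grad Bc one by (simp add: mult_mat_vec)
  finally have wB: "w = lam \<cdot>\<^sub>v (B *\<^sub>v ones_vec p)" .
  hence "1 = lam * (ones_vec p \<bullet> (B *\<^sub>v ones_vec p))"
    using w(2) Bc one comm_scalar_prod[OF w(1) one] by simp
  hence "1 / (ones_vec p \<bullet> (B *\<^sub>v ones_vec p)) = lam"
    by (metis div_by_1 mult_zero_right nonzero_mult_div_cancel_right zero_neq_one)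
  thus ?thesis
    unfolding long_short_mvp_def Let_def B option.sel by (simp add: wB field_simps)
qed

lemma factor_cov_carrier: "factor_cov p s2 \<beta> d \<in> carrier_mat p p"
  by (simp add: factor_cov_def)

lemma transpose_factor_cov: "transpose_mat (factor_cov p s2 \<beta> d) = factor_cov p s2 \<beta> d"
  by (rule eq_matI) (auto simp: factor_cov_def)

lemma factor_cov_mult_vec_index:
  assumes "v \<in> carrier_vec p" and "i < p"
  shows "(factor_cov p s2 \<beta> d *\<^sub>v v) $ i = s2 * \<beta> $ i * (\<Sum>l<p. \<beta> $ l * v $ l) + d $ i * v $ i"
proof -
  have "(factor_cov p s2 \<beta> d *\<^sub>v v) $ i
      = (\<Sum>l<p. s2 * \<beta> $ i * (\<beta> $ l * v $ l) + (if l = i then d $ i * v $ l else 0))"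
    using assms by (auto simp: factor_cov_def scalar_prod_def atLeast0LessThan algebra_simps
        intro!: sum.cong)
  also have "\<dots> = s2 * \<beta> $ i * (\<Sum>l<p. \<beta> $ l * v $ l) + d $ i * v $ i"
    using assms by (simp add: sum.distrib sum_distrib_left)
  finally show ?thesis .
qed

lemma port_var_factor_cov:
  assumes v: "v \<in> carrier_vec p"
  shows "port_var (factor_cov p s2 \<beta> d) v = s2 * (\<Sum>l<p. \<beta> $ l * v $ l)\<^sup>2 + (\<Sum>l<p. d $ l * (v $ l)\<^sup>2)"
proof -
  have "port_var (factor_cov p s2 \<beta> d) v = (\<Sum>i<p. v $ i * (factor_cov p s2 \<beta> d *\<^sub>v v) $ i)"
    unfolding port_var_def scalar_prod_def using v by (simp add: atLeast0LessThan factor_cov_def)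
  also have "\<dots> = (\<Sum>i<p. s2 * (\<Sum>l<p. \<beta> $ l * v $ l) * (\<beta> $ i * v $ i) + d $ i * (v $ i)\<^sup>2)"
    using v by (auto simp: factor_cov_mult_vec_index algebra_simps power2_eq_square intro!: sum.cong)
  also have "\<dots> = s2 * (\<Sum>l<p. \<beta> $ l * v $ l)\<^sup>2 + (\<Sum>l<p. d $ l * (v $ l)\<^sup>2)"
    by (simp add: sum.distrib sum_distrib_left[symmetric] power2_eq_square)
  finally show ?thesis .
qed

lemma port_var_factor_cov_pos:
  assumes "s2 \<ge> 0" and d: "\<And>i. i < p \<Longrightarrow> 0 < d $ i"
    and v: "v \<in> carrier_vec p" "v \<noteq> 0\<^sub>v p"
  shows "0 < port_var (factor_cov p s2 \<beta> d) v"
proof -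
  obtain l where l: "l < p" "v $ l \<noteq> 0"
    using v by (metis carrier_vecD eq_vecI index_zero_vec)
  have "0 < d $ l * (v $ l)\<^sup>2" using l d by simp
  also have "\<dots> \<le> (\<Sum>i<p. d $ i * (v $ i)\<^sup>2)"
    using l d by (intro member_le_sum) (auto intro!: mult_nonneg_nonneg simp: less_imp_le)
  finally show ?thesis
    unfolding port_var_factor_cov[OF v(1)] using \<open>s2 \<ge> 0\<close> by (simp add: add_nonneg_pos)
qed

lemma factor_KKT_support_threshold:
  fixes p :: nat and s2 lam :: real and \<beta> d w :: "real vec"
  defines "c \<equiv> s2 * (\<Sum>l<p. \<beta> $ l * w $ l)"
  defines "K \<equiv> {i. i < p \<and> 0 < w $ i}"
  defines "B \<equiv> (\<Sum>i\<in>K. \<beta> $ i / d $ i)" and "C \<equiv> (\<Sum>i\<in>K. (\<beta> $ i)\<^sup>2 / d $ i)"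
  assumes s2: "0 < s2" and lam: "0 < lam"
    and d: "\<And>i. i < p \<Longrightarrow> 0 < d $ i" and w: "\<And>i. i < p \<Longrightarrow> 0 \<le> w $ i"
    and weighted_beta_sum: "0 \<le> (\<Sum>i<p. \<beta> $ i / d $ i)"
    and K_proper: "K \<noteq> {..<p}"
    and on_support: "\<And>i. i \<in> K \<Longrightarrow> c * \<beta> $ i + d $ i * w $ i = lam"
    and off_support: "\<And>j. j < p \<Longrightarrow> j \<notin> K \<Longrightarrow> lam \<le> c * \<beta> $ j"
  shows "0 < B" and "\<And>i. i < p \<Longrightarrow> 0 < w $ i \<longleftrightarrow> \<beta> $ i < (1 / s2 + C) / B"
proof -
  have K: "K \<subseteq> {..<p}" unfolding K_def by auto
  have w_off: "w $ j = 0" if "j < p" "j \<notin> K" for j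
    using that w[of j] unfolding K_def by force
  have "c / s2 = (\<Sum>l<p. \<beta> $ l * w $ l)" using s2 unfolding c_def by simp
  also have "\<dots> = (\<Sum>i\<in>K. \<beta> $ i * w $ i)"
    using K w_off by (intro sum.mono_neutral_right) auto
  also have "\<dots> = (\<Sum>i\<in>K. lam * (\<beta> $ i / d $ i) - c * ((\<beta> $ i)\<^sup>2 / d $ i))"
  proof (rule sum.cong)
    fix i assume "i \<in> K"
    hence "0 < d $ i" using d K by auto
    hence "\<beta> $ i * w $ i = \<beta> $ i * (d $ i * w $ i) / d $ i" by simp
    also have "\<dots> = lam * (\<beta> $ i / d $ i) - c * ((\<beta> $ i)\<^sup>2 / d $ i)"
      unfolding on_support[OF \<open>i \<in> K\<close>, symmetric] using \<open>0 < d $ i\<close>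
      by (simp add: field_simps power2_eq_square)
    finally show "\<beta> $ i * w $ i = lam * (\<beta> $ i / d $ i) - c * ((\<beta> $ i)\<^sup>2 / d $ i)" .
  qed simp
  also have "\<dots> = lam * B - c * C"
    unfolding B_def C_def by (simp add: sum_subtractf sum_distrib_left)
  finally have "c / s2 = lam * B - c * C" .
  hence budget: "c * (1 / s2 + C) = lam * B" by (simp add: algebra_simps)
  have "0 \<le> C"
    unfolding C_def by (intro sum_nonneg divide_nonneg_pos) (use d K in auto)
  hence weight_pos: "0 < 1 / s2 + C" using s2 by (simp add: add_pos_nonneg)
  have "0 < c"
  proof (rule ccontr)
    assume "\<not> 0 < c"
    moreover obtain j0 where "j0 < p" "j0 \<notin> K" using K K_proper by blast
    hence "c \<noteq> 0" using off_support[of j0] lam by auto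
    ultimately have c_neg: "c < 0" by simp
    hence "lam * B < 0" using budget weight_pos by (metis mult_neg_pos)
    hence "B < 0" using lam by (simp add: mult_less_0_iff)
    moreover have "(\<Sum>i\<in>{..<p} - K. \<beta> $ i / d $ i) \<le> 0"
    proof (rule sum_nonpos)
      fix j assume j: "j \<in> {..<p} - K"
      hence "0 < c * \<beta> $ j" using off_support[of j] lam by fastforce
      hence "\<beta> $ j < 0" using c_neg by (simp add: zero_less_mult_iff)
      moreover have "0 < d $ j" using j d by simp
      ultimately show "\<beta> $ j / d $ j \<le> 0" by (simp add: divide_nonpos_pos)
    qed
    moreover have "(\<Sum>i<p. \<beta> $ i / d $ i) = B + (\<Sum>i\<in>{..<p} - K. \<beta> $ i / d $ i)"
      unfolding B_def using K by (metis finite_lessThan sum.subset_diff add.commute)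
    ultimately show False using weighted_beta_sum by linarith
  qed
  hence "0 < lam * B" using budget weight_pos by (metis mult_pos_pos)
  thus "0 < B" using lam by (simp add: zero_less_mult_iff)
  have threshold: "lam / c = (1 / s2 + C) / B"
    using budget \<open>0 < c\<close> \<open>0 < B\<close> by (simp add: field_simps)
  fix i assume i: "i < p"
  have "0 < w $ i \<longleftrightarrow> c * \<beta> $ i < lam"
  proof (cases "i \<in> K")
    case True
    thus ?thesis using on_support[OF True] d[OF i] unfolding K_def by auto
  next
    case False
    thus ?thesis using off_support[OF i False] i unfolding K_def by auto
  qed
  thus "0 < w $ i \<longleftrightarrow> \<beta> $ i < (1 / s2 + C) / B"
    unfolding threshold[symmetric] using \<open>0 < c\<close> by (simp add: pos_less_divide_eq mult.commute)
qed

lemma mono_sublevel_set_eq_lessThan: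
  fixes f :: "nat \<Rightarrow> 'a :: linorder"
  assumes mono: "\<And>i j. i \<le> j \<Longrightarrow> j < p \<Longrightarrow> f i \<le> f j"
  shows "{i. i < p \<and> f i < \<theta>} = {..<card {i. i < p \<and> f i < \<theta>}}"
proof (cases "{i. i < p \<and> f i < \<theta>} = {}")
  case True
  thus ?thesis by (simp only: card.empty lessThan_0)
next
  case False
  let ?A = "{i. i < p \<and> f i < \<theta>}"
  have "Max ?A \<in> ?A" using False by (intro Max_in) auto
  hence "?A = {..Max ?A}"
    using mono[of _ "Max ?A"] by (auto intro: Max_ge le_less_trans)
  thus ?thesis by (metis card_atMost lessThan_Suc_atMost)
qed

lemma long_only_mvp_full_support:
  fixes S :: "real mat"
  assumes S: "S \<in> carrier_mat p p" "transpose_mat S = S" "det S \<noteq> 0"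
    and mvp: "is_long_only_mvp p S w" and full: "\<And>i. i < p \<Longrightarrow> 0 < w $ i"
  shows "long_short_mvp p S = w"
proof -
  obtain lam where lam: "\<And>i. i < p \<Longrightarrow> 0 < w $ i \<Longrightarrow> (S *\<^sub>v w) $ i = lam"
    using long_only_mvp_KKT[OF S(1,2) mvp] by metis
  have w: "w \<in> carrier_vec p" "w \<bullet> ones_vec p = 1"
    using mvp unfolding is_long_only_mvp_def long_only_feasible_def by auto
  have "S *\<^sub>v w = lam \<cdot>\<^sub>v ones_vec p"
    using S(1) lam full by (intro eq_vecI) (auto simp: ones_vec_def)
  with S(1,3) w show ?thesis by (rule long_short_mvp_eqI)
qed

lemma factor_long_only_mvp_support_threshold:
  fixes p :: nat and s2 :: real and \<beta> d w :: "real vec"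
  defines "K \<equiv> {i. i < p \<and> 0 < w $ i}"
  assumes s2: "0 < s2" and d: "\<And>i. i < p \<Longrightarrow> 0 < d $ i"
    and "0 \<le> (\<Sum>i<p. \<beta> $ i / d $ i)"
    and mvp: "is_long_only_mvp p (factor_cov p s2 \<beta> d) w"
    and "K \<noteq> {..<p}"
  shows "0 < (\<Sum>i\<in>K. \<beta> $ i / d $ i)"
    and "\<And>i. i < p \<Longrightarrow> 0 < w $ i \<longleftrightarrow>
           \<beta> $ i < (1 / s2 + (\<Sum>i\<in>K. (\<beta> $ i)\<^sup>2 / d $ i)) / (\<Sum>i\<in>K. \<beta> $ i / d $ i)"
proof -
  let ?S = "factor_cov p s2 \<beta> d"
  define c where "c = s2 * (\<Sum>l<p. \<beta> $ l * w $ l)"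
  have w: "w \<in> carrier_vec p" "w \<bullet> ones_vec p = 1" "\<And>i. i < p \<Longrightarrow> 0 \<le> w $ i"
    using mvp unfolding is_long_only_mvp_def long_only_feasible_def by auto
  obtain lam where lam: "lam = port_var ?S w"
    and on_support: "\<And>i. i < p \<Longrightarrow> 0 < w $ i \<Longrightarrow> (?S *\<^sub>v w) $ i = lam"
    and above: "\<And>j. j < p \<Longrightarrow> lam \<le> (?S *\<^sub>v w) $ j"
    using long_only_mvp_KKT[OF factor_cov_carrier transpose_factor_cov mvp] by metis
  have "w \<noteq> 0\<^sub>v p" using w(2) by (auto simp: ones_vec_def)
  hence "0 < lam" unfolding lam using s2 d w(1) by (intro port_var_factor_cov_pos) auto
  have grad: "(?S *\<^sub>v w) $ i = c * \<beta> $ i + d $ i * w $ i" if "i < p" for i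
    unfolding c_def factor_cov_mult_vec_index[OF w(1) that] by simp
  have "c * \<beta> $ i + d $ i * w $ i = lam" if "i \<in> K" for i
    using that on_support grad unfolding K_def by simp
  moreover have "lam \<le> c * \<beta> $ j" if "j < p" "j \<notin> K" for j
  proof -
    have "w $ j = 0" using that w(3)[of j] unfolding K_def by force
    thus ?thesis using above[of j] grad[of j] that(1) by simp
  qed
  ultimately show "0 < (\<Sum>i\<in>K. \<beta> $ i / d $ i)"
    and "\<And>i. i < p \<Longrightarrow> 0 < w $ i \<longleftrightarrow>
           \<beta> $ i < (1 / s2 + (\<Sum>i\<in>K. (\<beta> $ i)\<^sup>2 / d $ i)) / (\<Sum>i\<in>K. \<beta> $ i / d $ i)"
    using factor_KKT_support_threshold[OF s2 \<open>0 < lam\<close> d w(3) assms(4)] assms(6)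
    unfolding K_def c_def by blast+
qed

theorem corollary2:
  fixes p :: nat and s2 :: real and \<beta> d w :: "real vec"
  assumes "p \<ge> 1" and "s2 > 0"
    and "\<beta> \<in> carrier_vec p" and "\<beta> \<noteq> 0\<^sub>v p"
    and "\<And>i j. i \<le> j \<Longrightarrow> j < p \<Longrightarrow> \<beta> $ i \<le> \<beta> $ j"
    and "d \<in> carrier_vec p" and "\<And>i. i < p \<Longrightarrow> d $ i > 0"
    and "(\<Sum>i<p. \<beta> $ i / d $ i) \<ge> 0"
    and "is_long_only_mvp p (factor_cov p s2 \<beta> d) w"
  defines "K \<equiv> {i. i < p \<and> w $ i > 0}"
  defines "k \<equiv> card K"
  shows "(K = {..<p} \<and> long_short_mvp p (factor_cov p s2 \<beta> d) = w)
       \<or> (K \<noteq> {..<p} \<and> (\<Sum>j<k. \<beta> $ j / d $ j) > 0 \<and>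
          (\<forall>i<p. w $ i > 0 \<longleftrightarrow>
             \<beta> $ i < (1 / s2 + (\<Sum>j<k. (\<beta> $ j)^2 / d $ j)) / (\<Sum>j<k. \<beta> $ j / d $ j)))"
proof (cases "K = {..<p}")
  case True
  have "det (factor_cov p s2 \<beta> d) \<noteq> 0"
    using assms(2,7) by (intro det_neq_0_if_port_var_pos[OF factor_cov_carrier] port_var_factor_cov_pos) auto
  hence "long_short_mvp p (factor_cov p s2 \<beta> d) = w"
    using True assms(9) unfolding K_def
    by (intro long_only_mvp_full_support[OF factor_cov_carrier transpose_factor_cov]) auto
  with True show ?thesis by simp
next
  case False
  define \<theta> where "\<theta> = (1 / s2 + (\<Sum>i\<in>K. (\<beta> $ i)\<^sup>2 / d $ i)) / (\<Sum>i\<in>K. \<beta> $ i / d $ i)"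
  note threshold =
    factor_long_only_mvp_support_threshold[OF assms(2,7,8,9) False[unfolded K_def], folded K_def]
  have K_mem: "i \<in> K \<longleftrightarrow> i < p \<and> 0 < w $ i" for i unfolding K_def by simp
  have "K = {i. i < p \<and> \<beta> $ i < \<theta>}"
    using K_mem threshold(2) unfolding \<theta>_def[symmetric] by blast
  hence "K = {..<k}" unfolding k_def using mono_sublevel_set_eq_lessThan[OF assms(5)] by simp
  show ?thesis unfolding \<open>K = {..<k}\<close>[symmetric] using False threshold by blast
qed

end
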